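(* Let $\mathcal{X}$ be a hereditary class above the Bell number with finite distinguishing number $k_{\mathcal{X}}$, and let $\ell_{\mathcal{X}},d_{\mathcal{X}},c_{\mathcal{X}}$ be constants such that every $G\in\mathcal{X}$ contains an induced subgraph $G'$ which is a strong $(\ell_{\mathcal{X}},d_{\mathcal{X}})$-graph with $|V(G)\setminus V(G')|<c_{\mathcal{X}}$ (such constants exist whenever $k_{\mathcal{X}}<\infty$). Then $\mathcal{X}\supseteq\mathcal{P}(w,H)$ for some infinite almost periodic word $w$ and some graph $H$ with loops allowed, of order at most $\ell_{\mathcal{X}}$, on the alphabet of $w$.
   Context: Graphs in classes are finite, simple, loopless; hereditary = closed under induced subgraphs and isomorphism. Speed $\mathcal{X}_n$: number of graphs in $\mathcal{X}$ on vertex set $\{1,\dots,n\}$. Above the Bell number: $\mathcal{X}_n\ge n^{(1-o(1))n}$ (equivalently speed at least the Bell number $B_n$). Distinguishing number: for $X\subseteq V(G)$, disjoint sets $U_1,\dots,U_m$ are distinguished by $X$ if vertices of the same $U_i$ have the same neighbourhood in $X$ and vertices in different $U_i$ have different neighbourhoods in $X$. $k_{\mathcal{X}}=\infty$ if for all $k,m$ some $G\in\mathcal{X}$ and $X\subseteq V(G)$ distinguish at least $m$ sets of size at least $k$; otherwise $k_{\mathcal{X}}$ is the least $k$ such that for some $m$, no vertex subset of a graph in $\mathcal{X}$ distinguishes more than $m$ sets of size at least $k$. $(\ell,d)$-graphs: for $U,W\subseteq V(G)$ let $\Delta(U,W)=\max\{|N(u)\cap W|,|N(w)\cap U|:u\in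 U,w\in W\}$ and $\overline{\Delta}(U,W)$ the same with $\overline N(x)=V(G)\setminus(N(x)\cup\{x\})$ in place of $N(x)$. A partition $\{V_1,\dots,V_{\ell'}\}$ of $V(G)$ is an $(\ell,d)$-partition if $\ell'\le\ell$ and for all (not necessarily distinct) $i,j$, $\Delta(V_i,V_j)\le d$ or $\overline\Delta(V_i,V_j)\le d$. It is strong if each bag has at least $5\cdot 2^{\ell}d$ vertices; a strong $(\ell,d)$-graph is one admitting a strong $(\ell,d)$-partition. Words: maps $w:S\to A$, $S=\{1,\dots,n\}$ or $\mathbb{N}$, $A$ finite; a factor of $w$ is a word $f$ with $f_i=w_{i+s}$ for some fixed $s\ge0$. Infinite $w$ is almost periodic if for each factor $f$ there is $k_f$ such that every factor of length $\ge k_f$ contains $f$. For $H$ with loops allowed on $A$ and $u_1<\dots<u_m$ positive integers, $G_{w,H}(u_1,\dots,u_m)$ has vertex set $\{u_i\}$ and $u_iu_j$ is an edge iff ($|u_i-u_j|=1$ and $w_{u_i}w_{u_j}\notin E(H)$) or ($|u_i-u_j|>1$ and $w_{u_i}w_{u_j}\in E(H)$), loops of $H$ accounting for equal letters. $\mathcal{P}(w,H)$ is the class of graphs isomorphic to some $G_{w,H}(u_1,\dots,u_m)$. *)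

theory Defs
  imports Complex_Main
begin

type_synonym graph = "nat set \<times> (nat \<Rightarrow> nat \<Rightarrow> bool)"

definition verts :: "graph \<Rightarrow> nat set" where "verts G = fst G"
definition adj :: "graph \<Rightarrow> nat \<Rightarrow> nat \<Rightarrow> bool" where "adj G = snd G"

definition wf_graph :: "graph \<Rightarrow> bool" where
  "wf_graph G \<longleftrightarrow> finite (verts G)
     \<and> (\<forall>x y. adj G x y \<longrightarrow> x \<in> verts G \<and> y \<in> verts G)
     \<and> (\<forall>x y. adj G x y \<longleftrightarrow> adj G y x)
     \<and> (\<forall>x. \<not> adj G x x)"

definition nbhd :: "graph \<Rightarrow> nat \<Rightarrow> nat set" where
  "nbhd G x = {y \<in> verts G. adj G x y}"

definition conbhd :: "graph \<Rightarrow> nat \<Rightarrow> nat set" where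
  "conbhd G x = verts G - (nbhd G x \<union> {x})"

definition induced :: "graph \<Rightarrow> nat set \<Rightarrow> graph" where
  "induced G S = (S \<inter> verts G, \<lambda>x y. x \<in> S \<and> y \<in> S \<and> adj G x y)"

definition graph_iso :: "graph \<Rightarrow> graph \<Rightarrow> bool" where
  "graph_iso G G' \<longleftrightarrow> (\<exists>f. bij_betw f (verts G) (verts G')
       \<and> (\<forall>x\<in>verts G. \<forall>y\<in>verts G. adj G x y \<longleftrightarrow> adj G' (f x) (f y)))"

definition hereditary :: "graph set \<Rightarrow> bool" where
  "hereditary \<X> \<longleftrightarrow> (\<forall>G\<in>\<X>. wf_graph G)
     \<and> (\<forall>G\<in>\<X>. \<forall>S. S \<subseteq> verts G \<longrightarrow> induced G S \<in> \<X>)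
     \<and> (\<forall>G\<in>\<X>. \<forall>G'. wf_graph G' \<and> graph_iso G G' \<longrightarrow> G' \<in> \<X>)"

definition speed :: "graph set \<Rightarrow> nat \<Rightarrow> nat" where
  "speed \<X> n = card {E. ({1..n}, E) \<in> \<X>}"

definition above_bell :: "graph set \<Rightarrow> bool" where
  "above_bell \<X> \<longleftrightarrow> (\<forall>\<epsilon>::real. \<epsilon> > 0 \<longrightarrow>
     (\<forall>\<^sub>F n in sequentially. real (speed \<X> n) \<ge> real n powr ((1 - \<epsilon>) * real n)))"

definition distinguishes :: "graph \<Rightarrow> nat set \<Rightarrow> nat set set \<Rightarrow> bool" where
  "distinguishes G X \<U> \<longleftrightarrow> X \<subseteq> verts G
     \<and> (\<forall>U\<in>\<U>. U \<subseteq> verts G)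
     \<and> (\<forall>U\<in>\<U>. \<forall>U'\<in>\<U>. U \<noteq> U' \<longrightarrow> U \<inter> U' = {})
     \<and> (\<forall>U\<in>\<U>. \<forall>u\<in>U. \<forall>v\<in>U. nbhd G u \<inter> X = nbhd G v \<inter> X)
     \<and> (\<forall>U\<in>\<U>. \<forall>U'\<in>\<U>. U \<noteq> U' \<longrightarrow>
          (\<forall>u\<in>U. \<forall>v\<in>U'. nbhd G u \<inter> X \<noteq> nbhd G v \<inter> X))"

definition finite_distinguishing_number :: "graph set \<Rightarrow> bool" where
  "finite_distinguishing_number \<X> \<longleftrightarrow> (\<exists>k m::nat. \<forall>G\<in>\<X>. \<forall>X \<U>.
      distinguishes G X \<U> \<and> (\<forall>U\<in>\<U>. card U \<ge> k) \<longrightarrow> card \<U> \<le> m)"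

definition Delta_le :: "graph \<Rightarrow> nat set \<Rightarrow> nat set \<Rightarrow> nat \<Rightarrow> bool" where
  "Delta_le G U W d \<longleftrightarrow> (\<forall>u\<in>U. card (nbhd G u \<inter> W) \<le> d)
                       \<and> (\<forall>w\<in>W. card (nbhd G w \<inter> U) \<le> d)"

definition coDelta_le :: "graph \<Rightarrow> nat set \<Rightarrow> nat set \<Rightarrow> nat \<Rightarrow> bool" where
  "coDelta_le G U W d \<longleftrightarrow> (\<forall>u\<in>U. card (conbhd G u \<inter> W) \<le> d)
                         \<and> (\<forall>w\<in>W. card (conbhd G w \<inter> U) \<le> d)"

definition ld_partition :: "graph \<Rightarrow> nat \<Rightarrow> nat \<Rightarrow> nat set set \<Rightarrow> bool" where
  "ld_partition G l d P \<longleftrightarrow> \<Union>P = verts G \<and> {} \<notin> P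
     \<and> (\<forall>A\<in>P. \<forall>B\<in>P. A \<noteq> B \<longrightarrow> A \<inter> B = {})
     \<and> card P \<le> l
     \<and> (\<forall>A\<in>P. \<forall>B\<in>P. Delta_le G A B d \<or> coDelta_le G A B d)"

definition strong_ld_graph :: "graph \<Rightarrow> nat \<Rightarrow> nat \<Rightarrow> bool" where
  "strong_ld_graph G l d \<longleftrightarrow> (\<exists>P. ld_partition G l d P
       \<and> (\<forall>A\<in>P. card A \<ge> 5 * 2 ^ l * d))"

text \<open>Words: infinite word w indexed by positive integers (w 0 is irrelevant).
  Finite factors are lists.\<close>
definition is_factor :: "(nat \<Rightarrow> 'a) \<Rightarrow> 'a list \<Rightarrow> bool" where
  "is_factor w f \<longleftrightarrow> (\<exists>s. \<forall>i<length f. f ! i = w (i + 1 + s))"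

definition contains_factor :: "'a list \<Rightarrow> 'a list \<Rightarrow> bool" where
  "contains_factor g f \<longleftrightarrow> (\<exists>t. t + length f \<le> length g \<and> (\<forall>i<length f. f ! i = g ! (i + t)))"

definition almost_periodic :: "(nat \<Rightarrow> 'a) \<Rightarrow> bool" where
  "almost_periodic w \<longleftrightarrow> (\<forall>f. is_factor w f \<longrightarrow>
     (\<exists>k. \<forall>g. is_factor w g \<and> length g \<ge> k \<longrightarrow> contains_factor g f))"

definition GwH :: "(nat \<Rightarrow> 'a) \<Rightarrow> ('a \<Rightarrow> 'a \<Rightarrow> bool) \<Rightarrow> nat set \<Rightarrow> graph" where
  "GwH w H U = (U, \<lambda>x y. x \<in> U \<and> y \<in> U \<and> x \<noteq> y \<and>
      ((dist (real x) (real y) = 1 \<and> \<not> H (w x) (w y)) \<or>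
       (dist (real x) (real y) > 1 \<and> H (w x) (w y))))"

definition P_class :: "(nat \<Rightarrow> 'a) \<Rightarrow> ('a \<Rightarrow> 'a \<Rightarrow> bool) \<Rightarrow> graph set" where
  "P_class w H = {G. wf_graph G \<and> (\<exists>U. finite U \<and> 0 \<notin> U \<and> graph_iso (GwH w H U) G)}"

end

theory Submission
  imports Defs "HOL-Library.FuncSet"
begin

text \<open>Suppose that for every symmetric graph H on the at most l bag labels the words realizable
  in the class (a path of vertices, consecutive ones adjacent iff H forbids it, all others
  adjacent iff H allows it) have bounded length N. In a graph of the class take the strong
  (l,d)-partition and call a pair of vertices exceptional if its adjacency differs from what H
  prescribes for their bags. Exceptional pairs form a graph of degree at most l d without
  induced paths on N + 2 vertices, so its components have at most s = (l d + 1)^N vertices.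
  Hence a graph on n vertices is described by a code from a set of size C^n n^((1 - 1/s) n),
  contradicting the Bell-number lower bound. So for some H the realizable words are unboundedly
  long; they form a factor-closed language over a finite alphabet, which by Koenig's and Zorn's
  lemma contains all factors of an almost periodic infinite word w, and then P(w,H) lies in the
  class.\<close>

section \<open>Factor-closed languages and almost periodic words\<close>

definition factors :: "(nat \<Rightarrow> 'a) \<Rightarrow> 'a list set" where
  "factors x = {f. \<exists>s. \<forall>i<length f. f ! i = x (s + i)}"

definition factor_closed :: "'a list set \<Rightarrow> bool" where
  "factor_closed L \<longleftrightarrow> (\<forall>g f. g \<in> L \<longrightarrow> contains_factor g f \<longrightarrow> f \<in> L)"

definition has_long_words :: "'a list set \<Rightarrow> bool" where
  "has_long_words L \<longleftrightarrow> (\<forall>n. \<exists>v\<in>L. n \<le> length v)"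

lemma contains_factor_refl: "contains_factor f f"
  unfolding contains_factor_def by auto

lemma contains_factor_trans:
  assumes "contains_factor g h" "contains_factor h f"
  shows "contains_factor g f"
proof -
  obtain t1 where t1: "t1 + length h \<le> length g" "\<forall>i<length h. h ! i = g ! (i + t1)"
    using assms(1) unfolding contains_factor_def by blast
  obtain t2 where t2: "t2 + length f \<le> length h" "\<forall>i<length f. f ! i = h ! (i + t2)"
    using assms(2) unfolding contains_factor_def by blast
  show ?thesis unfolding contains_factor_def
    by (rule exI[of _ "t2 + t1"]) (use t1 t2 in \<open>auto simp: add.assoc\<close>)
qed

lemma contains_factor_take_drop: "contains_factor g (take n (drop t g))"
  unfolding contains_factor_def
  by (rule exI[of _ "min t (length g)"]) (auto simp: add.commute)

lemma factor_closed_prefix: "factor_closed L \<Longrightarrow> v @ u \<in> L \<Longrightarrow> v \<in> L"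
  unfolding factor_closed_def using contains_factor_take_drop[of "v @ u" "length v" 0] by auto

lemma map_shift_in_factors: "map (\<lambda>i. x (s + i)) [0..<n] \<in> factors x"
  unfolding factors_def by auto

lemma factor_closed_factors: "factor_closed (factors x)"
  unfolding factor_closed_def
proof (intro allI impI)
  fix g f assume "g \<in> factors x" and "contains_factor g f"
  then obtain s t where s: "\<forall>i<length g. g ! i = x (s + i)"
    and t: "t + length f \<le> length g" "\<forall>i<length f. f ! i = g ! (i + t)"
    unfolding factors_def contains_factor_def by blast
  then have "\<forall>i<length f. f ! i = x (s + t + i)" by (auto simp: add_ac)
  then show "f \<in> factors x" unfolding factors_def by blast
qed

definition extendable :: "'a list set \<Rightarrow> 'a list \<Rightarrow> bool" where
  "extendable L v \<longleftrightarrow> (\<forall>n. \<exists>u. n \<le> length u \<and> v @ u \<in> L)"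

lemma extendable_snoc:
  assumes A: "finite A" and alphabet: "\<forall>v\<in>L. set v \<subseteq> A" and ext: "extendable L v"
  shows "\<exists>a\<in>A. extendable L (v @ [a])"
proof (rule ccontr)
  assume "\<not> ?thesis"
  then have "\<forall>a\<in>A. \<exists>n. \<forall>u. n \<le> length u \<longrightarrow> v @ [a] @ u \<notin> L"
    unfolding extendable_def by auto
  then obtain bound where bound: "\<And>a u. a \<in> A \<Longrightarrow> bound a \<le> length u \<Longrightarrow> v @ [a] @ u \<notin> L"
    by metis
  define n where "n = Suc (Max (bound ` A \<union> {0}))"
  obtain u where u: "n \<le> length u" "v @ u \<in> L" using ext unfolding extendable_def by blast
  then obtain a u' where au: "u = a # u'" by (cases u) (auto simp: n_def)
  have "a \<in> A" using alphabet u au by auto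
  moreover have "bound a \<le> Max (bound ` A \<union> {0})" using \<open>a \<in> A\<close> A by (intro Max_ge) auto
  ultimately show False using bound[of a u'] u au unfolding n_def by auto
qed

text \<open>Koenig's lemma: the prefixes of the words of L form a finitely branching infinite tree.\<close>

lemma factor_closed_has_word:
  assumes A: "finite A" and closed: "factor_closed L" and long: "has_long_words L"
    and alphabet: "\<forall>v\<in>L. set v \<subseteq> A"
  shows "\<exists>x. factors x \<subseteq> L \<and> range x \<subseteq> A"
proof -
  define next_letter where "next_letter v = (SOME a. a \<in> A \<and> extendable L (v @ [a]))" for v
  have next_letter: "next_letter v \<in> A \<and> extendable L (v @ [next_letter v])" if "extendable L v" for v
    unfolding next_letter_def using extendable_snoc[OF A alphabet that] by (metis (mono_tags, lifting) someI_ex)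
  define pre where "pre = rec_nat [] (\<lambda>_ v. v @ [next_letter v])"
  have pre_0: "pre 0 = []" and pre_Suc: "pre (Suc k) = pre k @ [next_letter (pre k)]" for k
    unfolding pre_def by simp_all
  have extendable_pre: "extendable L (pre k)" for k
    by (induction k) (use long next_letter in \<open>auto simp: pre_0 pre_Suc extendable_def has_long_words_def\<close>)
  define x where "x i = next_letter (pre i)" for i
  have pre_eq: "pre k = map x [0..<k]" for k
    by (induction k) (simp_all add: pre_0 pre_Suc x_def)
  have "f \<in> L" if f: "f \<in> factors x" for f
  proof -
    obtain s where s: "\<forall>i<length f. f ! i = x (s + i)" using f unfolding factors_def by blast
    have "f = take (length f) (drop s (pre (s + length f)))"
      unfolding pre_eq by (rule nth_equalityI) (use s in auto)
    moreover have "pre (s + length f) \<in> L"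
      using extendable_pre factor_closed_prefix[OF closed] unfolding extendable_def by blast
    ultimately show ?thesis using closed contains_factor_take_drop unfolding factor_closed_def by metis
  qed
  moreover have "range x \<subseteq> A" using next_letter extendable_pre unfolding x_def by auto
  ultimately show ?thesis by blast
qed

lemma has_long_words_Inter_chain:
  assumes A: "finite A" and long: "has_long_words L" and alphabet: "\<forall>v\<in>L. set v \<subseteq> A"
    and C: "\<forall>F\<in>C. F \<subseteq> L \<and> (\<exists>x. F = factors x)" and chain: "\<forall>F\<in>C. \<forall>F'\<in>C. F \<subseteq> F' \<or> F' \<subseteq> F"
  shows "has_long_words (L \<inter> \<Inter>C)"
  unfolding has_long_words_def
proof
  fix n
  show "\<exists>v\<in>L \<inter> \<Inter>C. n \<le> length v"
  proof (cases "C = {}")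
    case True
    then show ?thesis using long unfolding has_long_words_def by auto
  next
    case False
    \<comment> \<open>The words of length n in the members of C form a chain of nonempty subsets of a finite set.\<close>
    define W where "W F = {v \<in> F. length v = n}" for F :: "'a list set"
    have "finite (W ` C)"
    proof (rule finite_subset)
      have "W F \<subseteq> {v. set v \<subseteq> A \<and> length v = n}" if "F \<in> C" for F
        using C alphabet that unfolding W_def by fast
      then show "W ` C \<subseteq> Pow {v. set v \<subseteq> A \<and> length v = n}" by blast
      show "finite (Pow {v. set v \<subseteq> A \<and> length v = n})" using finite_lists_length_eq[OF A] by simp
    qed
    moreover have mono_W: "W F \<subseteq> W F'" if "F \<subseteq> F'" for F F' using that unfolding W_def by blast
    then have "subset.chain UNIV (W ` C)"
      by (simp add: subset_chain_def) (meson chain mono_W)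
    ultimately have "\<Inter>(W ` C) \<in> W ` C" using False by (intro Inter_in_chain) auto
    moreover have "W F \<noteq> {}" if "F \<in> C" for F
    proof -
      obtain x where "F = factors x" using C \<open>F \<in> C\<close> by blast
      moreover have "map (\<lambda>i. x (0 + i)) [0..<n] \<in> factors x" by (rule map_shift_in_factors)
      ultimately have "map x [0..<n] \<in> W F" unfolding W_def by simp
      then show ?thesis by blast
    qed
    ultimately have "\<Inter>(W ` C) \<noteq> {}" by (metis imageE)
    then obtain v where "v \<in> \<Inter>(W ` C)" by blast
    moreover obtain F where "F \<in> C" using False by blast
    ultimately have "v \<in> L \<inter> \<Inter>C" "length v = n" using C unfolding W_def by blast+
    then show ?thesis by auto
  qed
qed

lemma exists_minimal_word:
  assumes A: "finite A" and closed: "factor_closed L" and long: "has_long_words L"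
    and alphabet: "\<forall>v\<in>L. set v \<subseteq> A"
  shows "\<exists>y. factors y \<subseteq> L \<and> (\<forall>z. factors z \<subseteq> factors y \<longrightarrow> factors z = factors y)"
proof -
  define \<F> where "\<F> = {F. F \<subseteq> L \<and> (\<exists>x. F = factors x)}"
  have "\<exists>M\<in>\<F>. \<forall>F\<in>\<F>. M \<supseteq> F \<longrightarrow> F = M"
  proof (rule predicate_Zorn)
    show "partial_order_on \<F> (relation_of (\<lambda>F F'. F' \<subseteq> F) \<F>)"
      by (rule partial_order_on_relation_ofI) auto
  next
    fix C assume C: "C \<in> Chains (relation_of (\<lambda>F F'. F' \<subseteq> F) \<F>)"
    then have "C \<subseteq> \<F>" by (rule Chains_relation_of)
    have chain: "\<forall>F\<in>C. \<forall>F'\<in>C. F \<subseteq> F' \<or> F' \<subseteq> F"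
      using C unfolding Chains_def relation_of_def by blast
    have "\<forall>F\<in>C. factor_closed F" using \<open>C \<subseteq> \<F>\<close> factor_closed_factors unfolding \<F>_def by blast
    then have "factor_closed (L \<inter> \<Inter>C)" using closed unfolding factor_closed_def by blast
    moreover have "has_long_words (L \<inter> \<Inter>C)"
      by (rule has_long_words_Inter_chain[OF A long alphabet _ chain]) (use \<open>C \<subseteq> \<F>\<close> in \<open>auto simp: \<F>_def\<close>)
    moreover have "\<forall>v\<in>L \<inter> \<Inter>C. set v \<subseteq> A" using alphabet by blast
    ultimately obtain z where "factors z \<subseteq> L \<inter> \<Inter>C" using factor_closed_has_word[OF A] by blast
    then show "\<exists>F'\<in>\<F>. \<forall>F\<in>C. F' \<subseteq> F" by (intro bexI[of _ "factors z"]) (auto simp: \<F>_def)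
  qed
  then obtain y where y: "factors y \<subseteq> L" and minimal: "\<forall>F\<in>\<F>. factors y \<supseteq> F \<longrightarrow> F = factors y"
    unfolding \<F>_def by blast
  show ?thesis
  proof (intro exI[of _ y] conjI allI impI)
    fix z assume z: "factors z \<subseteq> factors y"
    then have "factors z \<in> \<F>" using y unfolding \<F>_def by blast
    then show "factors z = factors y" using minimal z by blast
  qed (fact y)
qed

text \<open>Words in the statement are indexed from 1 (w 0 is irrelevant), so a word y indexed from
  0 becomes the word w i = y (i - 1).\<close>

lemma is_factor_shift_iff: "is_factor (\<lambda>i. y (i - 1)) f \<longleftrightarrow> f \<in> factors y"
  unfolding is_factor_def factors_def by (simp add: add.commute)

lemma exists_almost_periodic_word:
  assumes A: "finite A" and closed: "factor_closed L" and long: "has_long_words L"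
    and alphabet: "\<forall>v\<in>L. set v \<subseteq> A"
  shows "\<exists>y. factors y \<subseteq> L \<and> range y \<subseteq> A \<and> almost_periodic (\<lambda>i. y (i - 1))"
proof -
  obtain y where y: "factors y \<subseteq> L"
    and minimal: "\<forall>z. factors z \<subseteq> factors y \<longrightarrow> factors z = factors y"
    using exists_minimal_word[OF assms] by blast
  have "[y i] \<in> L" for i using y map_shift_in_factors[of y i 1] by auto
  then have "range y \<subseteq> A" using alphabet by fastforce
  moreover have "almost_periodic (\<lambda>i. y (i - 1))"
    unfolding almost_periodic_def is_factor_shift_iff
  proof (intro allI impI, rule ccontr)
    \<comment> \<open>Otherwise the factors of y avoiding f contain all factors of some word, against minimality.\<close>
    fix f assume f: "f \<in> factors y"
      and avoided: "\<nexists>k. \<forall>g. g \<in> factors y \<and> k \<le> length g \<longrightarrow> contains_factor g f"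
    define M where "M = {g \<in> factors y. \<not> contains_factor g f}"
    have "factor_closed M"
      using factor_closed_factors[of y] contains_factor_trans unfolding factor_closed_def M_def by blast
    moreover have "has_long_words M" using avoided unfolding has_long_words_def M_def by blast
    moreover have "\<forall>v\<in>M. set v \<subseteq> A" using alphabet y unfolding M_def by auto
    ultimately obtain z where z: "factors z \<subseteq> M" using factor_closed_has_word[OF A] by blast
    then have "factors z = factors y" using minimal unfolding M_def by auto
    then show False using z f contains_factor_refl unfolding M_def by blast
  qed
  ultimately show ?thesis using y by blast
qed

section \<open>Realizable words\<close>

text \<open>word_adj H v i j is the adjacency of positions i and j in G_{w,H} for a factor v of w;
  v is realizable if this graph on its positions is an induced subgraph of a member of X.\<close>

definition word_adj :: "('a \<Rightarrow> 'a \<Rightarrow> bool) \<Rightarrow> 'a list \<Rightarrow> nat \<Rightarrow> nat \<Rightarrow> bool" where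
  "word_adj H v i j \<longleftrightarrow>
     (if i + 1 = j \<or> j + 1 = i then \<not> H (v ! i) (v ! j) else H (v ! i) (v ! j))"

definition realizable :: "graph set \<Rightarrow> ('a \<Rightarrow> 'a \<Rightarrow> bool) \<Rightarrow> 'a list \<Rightarrow> bool" where
  "realizable X H v \<longleftrightarrow> (\<exists>G\<in>X. \<exists>p. inj_on p {..<length v} \<and> p ` {..<length v} \<subseteq> verts G \<and>
     (\<forall>i<length v. \<forall>j<length v. i \<noteq> j \<longrightarrow> adj G (p i) (p j) = word_adj H v i j))"

lemma factor_closed_realizable: "factor_closed {v. set v \<subseteq> B \<and> realizable X H v}"
  unfolding factor_closed_def
proof (intro allI impI, elim conjE CollectE)
  fix g f assume "set g \<subseteq> B" and "realizable X H g" and "contains_factor g f"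
  then obtain t G p where t: "t + length f \<le> length g" "\<forall>i<length f. f ! i = g ! (i + t)"
    and G: "G \<in> X" "inj_on p {..<length g}" "p ` {..<length g} \<subseteq> verts G"
      "\<forall>i<length g. \<forall>j<length g. i \<noteq> j \<longrightarrow> adj G (p i) (p j) = word_adj H g i j"
    unfolding contains_factor_def realizable_def by blast
  have "set f \<subseteq> set g"
  proof
    fix a assume "a \<in> set f"
    then obtain i where "i < length f" "a = f ! i" by (auto simp: in_set_conv_nth)
    then have "a = g ! (i + t)" "i + t < length g" using t by auto
    then show "a \<in> set g" by simp
  qed
  then have "set f \<subseteq> B" using \<open>set g \<subseteq> B\<close> by blast
  moreover have "realizable X H f" unfolding realizable_def
  proof (intro bexI[OF _ G(1)] exI[of _ "\<lambda>i. p (i + t)"] conjI allI impI)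
    show "inj_on (\<lambda>i. p (i + t)) {..<length f}"
      using G(2) t(1) unfolding inj_on_def by fastforce
    show "(\<lambda>i. p (i + t)) ` {..<length f} \<subseteq> verts G" using G(3) t(1) by auto
    fix i j assume ij: "i < length f" "j < length f" "i \<noteq> j"
    then have "word_adj H f i j = word_adj H g (i + t) (j + t)" using t by (simp add: word_adj_def)
    then show "adj G (p (i + t)) (p (j + t)) = word_adj H f i j" using G(4) ij t(1) by simp
  qed
  ultimately show "f \<in> {v. set v \<subseteq> B \<and> realizable X H v}" by blast
qed

lemma graph_iso_sym: "graph_iso G G' \<Longrightarrow> graph_iso G' G"
  unfolding graph_iso_def
proof (elim exE conjE)
  fix f assume b: "bij_betw f (verts G) (verts G')"
    and a: "\<forall>x\<in>verts G. \<forall>y\<in>verts G. adj G x y = adj G' (f x) (f y)"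
  define g where "g = inv_into (verts G) f"
  have bg: "bij_betw g (verts G') (verts G)" using b bij_betw_inv_into g_def by blast
  have "adj G' x y = adj G (g x) (g y)" if "x \<in> verts G'" "y \<in> verts G'" for x y
  proof -
    have "f (g x) = x" "f (g y) = y" "g x \<in> verts G" "g y \<in> verts G"
      using b bg that unfolding g_def by (auto simp: bij_betw_inv_into_right bij_betwE)
    then show ?thesis using a by metis
  qed
  then show "\<exists>g. bij_betw g (verts G') (verts G) \<and> (\<forall>x\<in>verts G'. \<forall>y\<in>verts G'. adj G' x y = adj G (g x) (g y))"
    using bg by blast
qed

lemma graph_iso_trans: "graph_iso G1 G2 \<Longrightarrow> graph_iso G2 G3 \<Longrightarrow> graph_iso G1 G3"
  unfolding graph_iso_def
proof (elim exE conjE)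
  fix f g assume b1: "bij_betw f (verts G1) (verts G2)"
    and a1: "\<forall>x\<in>verts G1. \<forall>y\<in>verts G1. adj G1 x y = adj G2 (f x) (f y)"
    and b2: "bij_betw g (verts G2) (verts G3)"
    and a2: "\<forall>x\<in>verts G2. \<forall>y\<in>verts G2. adj G2 x y = adj G3 (g x) (g y)"
  have "bij_betw (g \<circ> f) (verts G1) (verts G3)" using b1 b2 bij_betw_trans by blast
  moreover have "\<forall>x\<in>verts G1. f x \<in> verts G2" using b1 bij_betwE by blast
  then have "\<forall>x\<in>verts G1. \<forall>y\<in>verts G1. adj G1 x y = adj G3 ((g \<circ> f) x) ((g \<circ> f) y)"
    using a1 a2 by auto
  ultimately show "\<exists>h. bij_betw h (verts G1) (verts G3) \<and> (\<forall>x\<in>verts G1. \<forall>y\<in>verts G1. adj G1 x y = adj G3 (h x) (h y))"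
    by blast
qed

lemma graph_iso_GwH_induced:
  assumes G: "wf_graph G" and p: "inj_on p {..<M}" "p ` {..<M} \<subseteq> verts G"
    and adj: "\<forall>i<M. \<forall>j<M. i \<noteq> j \<longrightarrow> adj G (p i) (p j) = word_adj H (map y [0..<M]) i j"
    and U: "U \<subseteq> {1..M}"
  shows "graph_iso (GwH (\<lambda>i. y (i - 1)) H U) (induced G ((\<lambda>u. p (u - 1)) ` U))"
proof -
  define \<phi> where "\<phi> u = p (u - 1)" for u
  have "inj_on \<phi> U"
  proof
    fix a b assume "a \<in> U" "b \<in> U" "\<phi> a = \<phi> b"
    moreover from \<open>a \<in> U\<close> \<open>b \<in> U\<close> have "a \<in> {1..M}" "b \<in> {1..M}" using U by blast+
    ultimately have "a - 1 = b - 1" using p(1) unfolding \<phi>_def inj_on_def by auto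
    then show "a = b" using \<open>a \<in> {1..M}\<close> \<open>b \<in> {1..M}\<close> by auto
  qed
  moreover have "verts (induced G (\<phi> ` U)) = \<phi> ` U"
    using p(2) U unfolding induced_def verts_def \<phi>_def by force
  moreover have "adj (GwH (\<lambda>i. y (i - 1)) H U) a b = adj (induced G (\<phi> ` U)) (\<phi> a) (\<phi> b)"
    if ab: "a \<in> U" "b \<in> U" for a b
  proof (cases "a = b")
    case True
    then show ?thesis using G unfolding GwH_def induced_def adj_def wf_graph_def by auto
  next
    case False
    have "a \<in> {1..M}" "b \<in> {1..M}" using U ab by blast+
    then have ij: "a - 1 < M" "b - 1 < M" "a - 1 \<noteq> b - 1" "0 < a" "0 < b" using False by auto
    then have "dist (real a) (real b) = 1 \<longleftrightarrow> a - 1 + 1 = b - 1 \<or> b - 1 + 1 = a - 1"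
      "dist (real a) (real b) > 1 \<longleftrightarrow> \<not> (a - 1 + 1 = b - 1 \<or> b - 1 + 1 = a - 1)"
      by (auto simp: dist_real_def abs_if)
    then show ?thesis
      using adj ij ab False unfolding GwH_def induced_def adj_def word_adj_def \<phi>_def by auto
  qed
  ultimately show ?thesis
    unfolding graph_iso_def \<phi>_def[symmetric] by (intro exI[of _ \<phi>]) (auto simp: GwH_def verts_def bij_betw_def)
qed

lemma P_class_subset:
  assumes her: "hereditary X" and all_realizable: "factors y \<subseteq> {v. realizable X H v}"
  shows "P_class (\<lambda>i. y (i - 1)) H \<subseteq> X"
proof
  fix G0 assume "G0 \<in> P_class (\<lambda>i. y (i - 1)) H"
  then obtain U where G0: "wf_graph G0" and U: "finite U" "0 \<notin> U"
    and iso: "graph_iso (GwH (\<lambda>i. y (i - 1)) H U) G0"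
    unfolding P_class_def by blast
  define M where "M = Max (insert 0 U)"
  have U_sub: "U \<subseteq> {1..M}" using U unfolding M_def by (auto simp: Suc_le_eq) (metis gr0I)
  have "map (\<lambda>i. y (0 + i)) [0..<M] \<in> factors y" by (rule map_shift_in_factors)
  then have "realizable X H (map y [0..<M])" using all_realizable by auto
  then obtain G p where G: "G \<in> X" and p: "inj_on p {..<M}" "p ` {..<M} \<subseteq> verts G"
    and adj: "\<forall>i<M. \<forall>j<M. i \<noteq> j \<longrightarrow> adj G (p i) (p j) = word_adj H (map y [0..<M]) i j"
    unfolding realizable_def by auto
  define T where "T = (\<lambda>u. p (u - 1)) ` U"
  have "wf_graph G" using her G unfolding hereditary_def by blast
  then have "graph_iso (induced G T) G0"
    using graph_iso_GwH_induced[OF _ p adj U_sub] iso graph_iso_sym graph_iso_trans unfolding T_def by blast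
  moreover have "T \<subseteq> verts G" using p(2) U_sub unfolding T_def by force
  then have "induced G T \<in> X" using her G unfolding hereditary_def by blast
  ultimately show "G0 \<in> X" using her G0 unfolding hereditary_def by blast
qed

section \<open>Breadth-first layers and induced paths\<close>

primrec ball :: "('a \<Rightarrow> 'a \<Rightarrow> bool) \<Rightarrow> 'a \<Rightarrow> nat \<Rightarrow> 'a set" where
  "ball R x 0 = {x}"
| "ball R x (Suc r) = ball R x r \<union> {y. \<exists>z\<in>ball R x r. R z y}"

definition layer :: "('a \<Rightarrow> 'a \<Rightarrow> bool) \<Rightarrow> 'a \<Rightarrow> nat \<Rightarrow> 'a set" where
  "layer R x k = (if k = 0 then {x} else ball R x k - ball R x (k - 1))"

text \<open>For symmetric R the last clause excludes every chord of the path p 0, ..., p k.\<close>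

definition induced_path :: "('a \<Rightarrow> 'a \<Rightarrow> bool) \<Rightarrow> (nat \<Rightarrow> 'a) \<Rightarrow> nat \<Rightarrow> bool" where
  "induced_path R p k \<longleftrightarrow> inj_on p {..k} \<and> (\<forall>i<k. R (p i) (p (Suc i)))
     \<and> (\<forall>i\<le>k. \<forall>j\<le>k. i + 1 < j \<longrightarrow> \<not> R (p i) (p j))"

lemma ball_mono: "i \<le> j \<Longrightarrow> ball R x i \<subseteq> ball R x j"
  by (induction j) (auto simp: le_Suc_eq)

lemma finite_card_ball:
  assumes finite: "\<And>z. finite {y. R z y}" and degree: "\<And>z. card {y. R z y} \<le> D"
  shows "finite (ball R x r) \<and> card (ball R x r) \<le> (D + 1) ^ r"
proof (induction r)
  case 0
  then show ?case by simp
next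
  case (Suc r)
  have eq: "ball R x (Suc r) = ball R x r \<union> (\<Union>z\<in>ball R x r. {y. R z y})" by auto
  have "card (ball R x (Suc r)) \<le> card (ball R x r) + card (\<Union>z\<in>ball R x r. {y. R z y})"
    unfolding eq by (rule card_Un_le)
  also have "card (\<Union>z\<in>ball R x r. {y. R z y}) \<le> (\<Sum>z\<in>ball R x r. card {y. R z y})"
    using Suc by (intro card_UN_le) auto
  also have "\<dots> \<le> card (ball R x r) * D"
    using sum_bounded_above[of "ball R x r" "\<lambda>z. card {y. R z y}" D] degree by auto
  finally have "card (ball R x (Suc r)) \<le> card (ball R x r) * (D + 1)" by simp
  also have "\<dots> \<le> (D + 1) ^ r * (D + 1)" using Suc by (intro mult_le_mono1) simp
  also have "\<dots> = (D + 1) ^ Suc r" by (simp only: power_Suc2)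
  finally show ?case using Suc finite unfolding eq by simp
qed

lemma layer_subset_ball: "layer R x i \<subseteq> ball R x i"
  by (auto simp: layer_def)

lemma layer_path:
  assumes "y \<in> layer R x k"
  shows "\<exists>p. p k = y \<and> (\<forall>i\<le>k. p i \<in> layer R x i) \<and> (\<forall>i<k. R (p i) (p (Suc i)))"
  using assms
proof (induction k arbitrary: y)
  case 0
  then show ?case by (intro exI[of _ "\<lambda>_. y"]) (auto simp: layer_def)
next
  case (Suc k)
  then have y: "y \<in> ball R x (Suc k)" "y \<notin> ball R x k" by (auto simp: layer_def)
  then obtain z where z: "z \<in> ball R x k" "R z y" by auto
  have "z \<in> layer R x k"
  proof (cases k)
    case 0
    then show ?thesis using z by (simp add: layer_def)
  next
    case (Suc k')
    then have "z \<notin> ball R x k'" using z y by auto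
    then show ?thesis using z Suc by (simp add: layer_def)
  qed
  then obtain p where p: "p k = z" "\<forall>i\<le>k. p i \<in> layer R x i" "\<forall>i<k. R (p i) (p (Suc i))"
    using Suc.IH by blast
  show ?case
    by (rule exI[of _ "p(Suc k := y)"]) (use p Suc.prems z in \<open>auto simp: le_Suc_eq less_Suc_eq\<close>)
qed

lemma layers_disjoint:
  assumes "i < j" "y \<in> layer R x i"
  shows "y \<notin> layer R x j"
proof -
  have "i \<le> j - 1" using assms(1) by simp
  then have "y \<in> ball R x (j - 1)"
    using ball_mono[of i "j - 1" R x] layer_subset_ball[of R x i] assms(2) by blast
  then show ?thesis using assms(1) by (auto simp: layer_def)
qed

lemma layers_not_adjacent:
  assumes "i + 1 < j" "y \<in> layer R x i" "z \<in> layer R x j"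
  shows "\<not> R y z"
proof
  assume "R y z"
  moreover have "y \<in> ball R x i" using assms(2) layer_subset_ball by fastforce
  ultimately have "z \<in> ball R x (Suc i)" by auto
  moreover have "ball R x (Suc i) \<subseteq> ball R x (j - 1)" using assms(1) by (intro ball_mono) simp
  ultimately show False using assms by (auto simp: layer_def)
qed

lemma layer_induced_path:
  assumes "layer R x k \<noteq> {}"
  shows "\<exists>p. induced_path R p k"
proof -
  obtain y where "y \<in> layer R x k" using assms by blast
  then obtain p where "p k = y" and p: "\<forall>i\<le>k. p i \<in> layer R x i" "\<forall>i<k. R (p i) (p (Suc i))"
    by (blast dest: layer_path)
  have "inj_on p {..k}"
  proof (rule inj_onI, rule ccontr)
    fix i j assume ij: "i \<in> {..k}" "j \<in> {..k}" "p i = p j" "i \<noteq> j"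
    have "p i \<in> layer R x i" "p j \<in> layer R x j" using ij p(1) by auto
    moreover consider "i < j" | "j < i" using ij by linarith
    ultimately show False using \<open>p i = p j\<close> layers_disjoint by metis
  qed
  moreover have "\<not> R (p i) (p j)" if "i \<le> k" "j \<le> k" "i + 1 < j" for i j
    using layers_not_adjacent[of i j "p i" R x "p j"] that p(1) by auto
  ultimately show ?thesis unfolding induced_path_def using p(2) by blast
qed

lemma reachable_subset_ball:
  assumes "layer R x (Suc N) = {}" "R\<^sup>*\<^sup>* x y"
  shows "y \<in> ball R x N"
  using assms(2)
proof (induction rule: rtranclp_induct)
  case base
  then show ?case using ball_mono[of 0 N R x] by auto
next
  case (step y z)
  then have "z \<in> ball R x (Suc N)" by auto
  then show ?case using assms(1) by (auto simp: layer_def)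
qed

lemma finite_card_reachable:
  assumes "\<And>z. finite {y. R z y}" "\<And>z. card {y. R z y} \<le> D"
    and no_path: "\<And>p. \<not> induced_path R p (Suc N)"
  shows "finite {y. R\<^sup>*\<^sup>* x y} \<and> card {y. R\<^sup>*\<^sup>* x y} \<le> (D + 1) ^ N"
proof -
  have "layer R x (Suc N) = {}" using layer_induced_path[of R x "Suc N"] no_path by blast
  then have sub: "{y. R\<^sup>*\<^sup>* x y} \<subseteq> ball R x N" using reachable_subset_ball[of R x N] by auto
  have ball: "finite (ball R x N) \<and> card (ball R x N) \<le> (D + 1) ^ N"
    by (rule finite_card_ball) (fact assms)+
  show ?thesis using finite_subset[OF sub] card_mono[OF _ sub] ball by (meson le_trans)
qed

section \<open>Encoding graphs whose realizable words are short\<close>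

definition bounded_fibre_retractions :: "'a set \<Rightarrow> nat \<Rightarrow> ('a \<Rightarrow> 'a) set" where
  "bounded_fibre_retractions V s = {f \<in> V \<rightarrow>\<^sub>E V. (\<forall>x\<in>V. f (f x) = f x) \<and> (\<forall>x\<in>V. card {z\<in>V. f z = f x} \<le> s)}"

lemma bounded_fibre_retractions_subset:
  assumes V: "finite V"
  shows "bounded_fibre_retractions V s
    \<subseteq> (\<Union>M\<in>{M. M \<subseteq> V \<and> card V \<le> s * card M}. \<Pi>\<^sub>E x\<in>V. if x \<in> M then {x} else M)"
proof
  fix f assume f: "f \<in> bounded_fibre_retractions V s"
  define M where "M = f ` V"
  have f_V: "f \<in> V \<rightarrow>\<^sub>E V" using f unfolding bounded_fibre_retractions_def by blast
  have "card V \<le> (\<Sum>m\<in>M. card {z\<in>V. f z = m})"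
  proof -
    have "V = (\<Union>m\<in>M. {z\<in>V. f z = m})" unfolding M_def by auto
    then show ?thesis by (metis card_UN_le V finite_imageI M_def)
  qed
  also have "\<dots> \<le> (\<Sum>m\<in>M. s)"
    using f unfolding bounded_fibre_retractions_def M_def by (intro sum_mono) auto
  finally have "M \<in> {M. M \<subseteq> V \<and> card V \<le> s * card M}"
    using f_V unfolding M_def by (auto simp: mult.commute)
  moreover have "f \<in> (\<Pi>\<^sub>E x\<in>V. if x \<in> M then {x} else M)"
    using f f_V unfolding bounded_fibre_retractions_def M_def by (auto simp: PiE_def)
  ultimately show "f \<in> (\<Union>M\<in>{M. M \<subseteq> V \<and> card V \<le> s * card M}. \<Pi>\<^sub>E x\<in>V. if x \<in> M then {x} else M)"
    by blast
qed

lemma card_retractions_onto_le: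
  assumes V: "finite V" and M: "M \<subseteq> V" "card V \<le> s * card M" and s: "s > 0" and n: "card V \<ge> 1"
  shows "real (card (\<Pi>\<^sub>E x\<in>V. if x \<in> M then {x} else M))
    \<le> real (card V) powr (real (card V) - real (card V) / real s)"
proof -
  define n where "n = card V"
  have "card (\<Pi>\<^sub>E x\<in>V. if x \<in> M then {x} else M) = (\<Prod>x\<in>V. if x \<in> M then 1 else card M)"
    using V by (simp add: card_PiE if_distrib cong: if_cong)
  also have "\<dots> = card M ^ card (V - M)"
    using V by (simp add: prod.If_cases Diff_eq)
  also have "card (V - M) = n - card M" using M V unfolding n_def by (simp add: card_Diff_subset finite_subset)
  finally have "real (card (\<Pi>\<^sub>E x\<in>V. if x \<in> M then {x} else M)) = real (card M) ^ (n - card M)" by simp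
  also have "card M \<le> n" using M V unfolding n_def by (simp add: card_mono)
  then have "real (card M) ^ (n - card M) \<le> real n ^ (n - card M)" by (intro power_mono) auto
  also have "\<dots> = real n powr real (n - card M)" using n unfolding n_def by (simp add: powr_realpow)
  also have "\<dots> \<le> real n powr (real n - real n / real s)"
  proof (rule powr_mono)
    have "real n \<le> real s * real (card M)" using M unfolding n_def by (metis of_nat_le_iff of_nat_mult)
    then have "real n / real s \<le> real (card M)" using s by (simp add: divide_le_eq mult.commute)
    then show "real (n - card M) \<le> real n - real n / real s" using \<open>card M \<le> n\<close> by (simp add: of_nat_diff)
  qed (use n n_def in simp)
  finally show ?thesis unfolding n_def .
qed

lemma card_bounded_fibre_retractions_le:
  assumes V: "finite V" and s: "s > 0" and n: "card V \<ge> 1"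
  shows "real (card (bounded_fibre_retractions V s))
    \<le> 2 ^ card V * real (card V) powr (real (card V) - real (card V) / real s)"
proof -
  define B where "B = real (card V) powr (real (card V) - real (card V) / real s)"
  define \<M> where "\<M> = {M. M \<subseteq> V \<and> card V \<le> s * card M}"
  have "finite \<M>" using V unfolding \<M>_def by auto
  have "card (bounded_fibre_retractions V s) \<le> card (\<Union>M\<in>\<M>. \<Pi>\<^sub>E x\<in>V. if x \<in> M then {x} else M)"
    using bounded_fibre_retractions_subset[OF V] \<open>finite \<M>\<close> V unfolding \<M>_def
    by (intro card_mono) (auto intro!: finite_PiE dest: finite_subset)
  also have "\<dots> \<le> (\<Sum>M\<in>\<M>. card (\<Pi>\<^sub>E x\<in>V. if x \<in> M then {x} else M))"
    using \<open>finite \<M>\<close> by (rule card_UN_le)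
  finally have "real (card (bounded_fibre_retractions V s))
      \<le> (\<Sum>M\<in>\<M>. real (card (\<Pi>\<^sub>E x\<in>V. if x \<in> M then {x} else M)))"
    by (simp only: of_nat_le_iff flip: of_nat_sum)
  also have "\<dots> \<le> (\<Sum>M\<in>\<M>. B)"
  proof (rule sum_mono)
    fix M assume "M \<in> \<M>"
    then have "M \<subseteq> V" "card V \<le> s * card M" unfolding \<M>_def by auto
    from card_retractions_onto_le[OF V this s n]
    show "real (card (\<Pi>\<^sub>E x\<in>V. if x \<in> M then {x} else M)) \<le> B" unfolding B_def .
  qed
  also have "\<dots> = real (card \<M>) * B" by simp
  also have "\<dots> \<le> 2 ^ card V * B"
  proof (rule mult_right_mono)
    have "card \<M> \<le> card (Pow V)" using V unfolding \<M>_def by (intro card_mono) auto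
    then show "real (card \<M>) \<le> 2 ^ card V" using V by (simp add: card_Pow)
  qed (simp add: B_def)
  finally show ?thesis unfolding B_def .
qed

definition rank :: "nat set \<Rightarrow> nat \<Rightarrow> nat" where
  "rank B y = card {z\<in>B. z < y}"

lemma rank_less: "finite B \<Longrightarrow> y \<in> B \<Longrightarrow> rank B y < card B"
  unfolding rank_def by (rule psubset_card_mono) auto

lemma inj_on_rank:
  assumes "finite B"
  shows "inj_on (rank B) B"
proof -
  have less: "rank B y < rank B y'" if "y \<in> B" "y' \<in> B" "y < y'" for y y'
    unfolding rank_def using assms that by (intro psubset_card_mono) auto
  show ?thesis
    by (rule inj_onI) (metis less less_irrefl linorder_neqE_nat)
qed

definition graph_on_labels :: "nat \<Rightarrow> (nat \<Rightarrow> nat \<Rightarrow> bool) \<Rightarrow> bool" where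
  "graph_on_labels l H \<longleftrightarrow> (\<forall>x y. H x y \<longrightarrow> x < l \<and> y < l) \<and> (\<forall>x y. H x y = H y x)"

lemma finite_graphs_on_labels: "finite {H. graph_on_labels l H}"
proof (rule finite_subset)
  show "{H. graph_on_labels l H} \<subseteq> (\<lambda>R x y. (x, y) \<in> R) ` Pow ({..<l} \<times> {..<l})"
  proof
    fix H assume "H \<in> {H. graph_on_labels l H}"
    then have "{(x, y). H x y} \<in> Pow ({..<l} \<times> {..<l})" unfolding graph_on_labels_def by auto
    moreover have "H = (\<lambda>x y. (x, y) \<in> {(x, y). H x y})" by simp
    ultimately show "H \<in> (\<lambda>R x y. (x, y) \<in> R) ` Pow ({..<l} \<times> {..<l})" by blast
  qed
qed simp

text \<open>A graph on {1..n} is recovered from a code per vertex x (whether x lies outside S,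
  the label of its bag, the ranks of its exceptional neighbours in its block, the ranks of its
  neighbours outside S), the label graph H, and the map f sending each vertex to the
  representative of its block.\<close>

definition decode :: "nat \<Rightarrow> (nat \<Rightarrow> bool \<times> nat \<times> nat set \<times> nat set) \<Rightarrow> (nat \<Rightarrow> nat \<Rightarrow> bool)
    \<Rightarrow> (nat \<Rightarrow> nat) \<Rightarrow> nat \<Rightarrow> nat \<Rightarrow> bool" where
  "decode n \<phi> H f x y \<longleftrightarrow> x \<in> {1..n} \<and> y \<in> {1..n} \<and> x \<noteq> y \<and>
     (if y \<in> {z\<in>{1..n}. fst (\<phi> z)} then rank {z\<in>{1..n}. fst (\<phi> z)} y \<in> snd (snd (snd (\<phi> x)))
      else if x \<in> {z\<in>{1..n}. fst (\<phi> z)} then rank {z\<in>{1..n}. fst (\<phi> z)} x \<in> snd (snd (snd (\<phi> y)))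
      else H (fst (snd (\<phi> x))) (fst (snd (\<phi> y)))
        \<noteq> (f x = f y \<and> rank {z\<in>{1..n}. f z = f x} y \<in> fst (snd (snd (\<phi> x)))))"

lemma decode_cong:
  assumes "\<forall>x\<in>{1..n}. \<phi> x = \<phi>' x" "\<forall>x\<in>{1..n}. f x = f' x"
  shows "decode n \<phi> H f = decode n \<phi>' H f'"
proof -
  have outside: "{z\<in>{1..n}. fst (\<phi> z)} = {z\<in>{1..n}. fst (\<phi>' z)}" using assms by auto
  have "x \<in> {1..n} \<Longrightarrow> {z\<in>{1..n}. f z = f x} = {z\<in>{1..n}. f' z = f' x}" for x
    using assms by auto
  then show ?thesis
    unfolding decode_def outside using assms by (intro ext) (auto simp del: atLeastAtMost_iff)
qed

definition vertex_codes :: "nat \<Rightarrow> nat \<Rightarrow> nat \<Rightarrow> (bool \<times> nat \<times> nat set \<times> nat set) set" where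
  "vertex_codes l s c = UNIV \<times> {..l} \<times> Pow {..<s} \<times> Pow {..<c}"

lemma Delta_le_sym: "Delta_le G A B d = Delta_le G B A d"
  unfolding Delta_le_def by auto

locale bounded_words_graph =
  fixes X :: "graph set" and l d c N n :: nat and E :: "nat \<Rightarrow> nat \<Rightarrow> bool"
    and S :: "nat set" and P :: "nat set set"
  assumes hereditary: "hereditary X" and graph_in_X: "({1..n}, E) \<in> X"
    and S_subset: "S \<subseteq> {1..n}" and card_outside_S: "card ({1..n} - S) < c"
    and partition: "ld_partition (induced ({1..n}, E) S) l d P"
    and no_long_words: "\<And>H v. graph_on_labels l H \<Longrightarrow> length v = Suc (Suc N) \<Longrightarrow> set v \<subseteq> {..<l}
      \<Longrightarrow> \<not> realizable X H v"
begin

abbreviation "V \<equiv> {1..n::nat}"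
abbreviation "comp_size \<equiv> (l * d + 1) ^ N"
abbreviation "G' \<equiv> induced ({1..n}, E) S"

lemma E_in_V: "E x y \<Longrightarrow> x \<in> V \<and> y \<in> V"
  and E_sym: "E x y = E y x"
  and E_irrefl: "\<not> E x x"
proof -
  have "wf_graph ({1..n}, E)" using hereditary graph_in_X unfolding hereditary_def by blast
  then show "E x y \<Longrightarrow> x \<in> V \<and> y \<in> V" "E x y = E y x" "\<not> E x x"
    unfolding wf_graph_def verts_def adj_def by auto
qed

lemma verts_G': "verts G' = S" using S_subset unfolding induced_def verts_def by auto
lemma adj_G': "adj G' x y = (x \<in> S \<and> y \<in> S \<and> E x y)" unfolding induced_def adj_def by auto
lemma finite_S: "finite S" using S_subset finite_subset by blast

lemma Union_P: "\<Union>P = S"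
  and disjoint_P: "\<And>A B. A \<in> P \<Longrightarrow> B \<in> P \<Longrightarrow> A \<noteq> B \<Longrightarrow> A \<inter> B = {}"
  and card_P: "card P \<le> l"
  and Delta_P: "\<And>A B. A \<in> P \<Longrightarrow> B \<in> P \<Longrightarrow> Delta_le G' A B d \<or> coDelta_le G' A B d"
  using partition verts_G' unfolding ld_partition_def by auto

lemma finite_P: "finite P"
  using Union_P finite_S by (metis finite_UnionD)

definition bag_label :: "nat set \<Rightarrow> nat" where
  "bag_label = (SOME h. bij_betw h P {0..<card P})"

lemma bag_label_inj: "A \<in> P \<Longrightarrow> B \<in> P \<Longrightarrow> bag_label A = bag_label B \<Longrightarrow> A = B"
  and bag_label_less: "A \<in> P \<Longrightarrow> bag_label A < l"
proof -
  have "bij_betw bag_label P {0..<card P}"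
    unfolding bag_label_def using ex_bij_betw_finite_nat[OF finite_P] by (rule someI_ex)
  then show "A \<in> P \<Longrightarrow> B \<in> P \<Longrightarrow> bag_label A = bag_label B \<Longrightarrow> A = B" "A \<in> P \<Longrightarrow> bag_label A < l"
    using card_P unfolding bij_betw_def inj_on_def by (blast, fastforce)
qed

definition bag :: "nat \<Rightarrow> nat set" where
  "bag x = (THE A. A \<in> P \<and> x \<in> A)"

lemma bag_eq: "A \<in> P \<Longrightarrow> x \<in> A \<Longrightarrow> bag x = A"
  unfolding bag_def using disjoint_P by (intro the_equality) blast+

lemma bag_in_P: "x \<in> S \<Longrightarrow> bag x \<in> P" and mem_bag: "x \<in> S \<Longrightarrow> x \<in> bag x"
  using bag_eq Union_P by blast+

definition label :: "nat \<Rightarrow> nat" where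
  "label x = bag_label (bag x)"

lemma label_less: "x \<in> S \<Longrightarrow> label x < l"
  unfolding label_def using bag_in_P bag_label_less by blast

definition H_P :: "nat \<Rightarrow> nat \<Rightarrow> bool" where
  "H_P a a' \<longleftrightarrow> (\<exists>A\<in>P. \<exists>B\<in>P. bag_label A = a \<and> bag_label B = a' \<and> \<not> Delta_le G' A B d)"

lemma H_P_bag_label: "A \<in> P \<Longrightarrow> B \<in> P \<Longrightarrow> H_P (bag_label A) (bag_label B) \<longleftrightarrow> \<not> Delta_le G' A B d"
  unfolding H_P_def using bag_label_inj by blast

lemma graph_on_labels_H_P: "graph_on_labels l H_P"
  unfolding graph_on_labels_def
proof (rule conjI)
  show "\<forall>a a'. H_P a a' \<longrightarrow> a < l \<and> a' < l" unfolding H_P_def using bag_label_less by blast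
  show "\<forall>a a'. H_P a a' = H_P a' a" unfolding H_P_def using Delta_le_sym by blast
qed

text \<open>The pairs whose adjacency disagrees with the prediction of H_P; since every pair of bags
  is sparse or co-sparse, each vertex has at most d exceptional partners in each bag.\<close>

definition exceptional :: "nat \<Rightarrow> nat \<Rightarrow> bool" where
  "exceptional x y \<longleftrightarrow> x \<in> S \<and> y \<in> S \<and> x \<noteq> y \<and> E x y \<noteq> H_P (label x) (label y)"

lemma exceptional_sym: "exceptional x y = exceptional y x"
  using E_sym graph_on_labels_H_P unfolding exceptional_def graph_on_labels_def by metis

lemma exceptional_in_S: "exceptional x y \<Longrightarrow> x \<in> S \<and> y \<in> S"
  unfolding exceptional_def by auto

lemma finite_exceptional: "finite {y. exceptional x y}"
  using finite_S exceptional_in_S by (metis (no_types, lifting) finite_subset mem_Collect_eq subsetI)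

lemma card_exceptional_in_bag_le:
  assumes x: "x \<in> S" and B: "B \<in> P"
  shows "card {y\<in>B. exceptional x y} \<le> d"
proof -
  have A: "bag x \<in> P" "x \<in> bag x" using x bag_in_P mem_bag by auto
  have label_B: "y \<in> B \<Longrightarrow> label y = bag_label B" for y unfolding label_def using bag_eq B by auto
  have fin: "finite (nbhd G' x \<inter> B)" "finite (conbhd G' x \<inter> B)"
    using finite_S verts_G' unfolding nbhd_def conbhd_def by auto
  show ?thesis
  proof (cases "Delta_le G' (bag x) B d")
    case True
    then have "card (nbhd G' x \<inter> B) \<le> d" using A unfolding Delta_le_def by auto
    moreover have "{y\<in>B. exceptional x y} \<subseteq> nbhd G' x \<inter> B"
      using True label_B H_P_bag_label[OF A(1) B]
      unfolding exceptional_def nbhd_def verts_G' adj_G' label_def by auto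
    ultimately show ?thesis using card_mono[OF fin(1)] le_trans by blast
  next
    case False
    then have "card (conbhd G' x \<inter> B) \<le> d"
      using Delta_P[OF A(1) B] A unfolding coDelta_le_def by auto
    moreover have "{y\<in>B. exceptional x y} \<subseteq> conbhd G' x \<inter> B"
      using False label_B H_P_bag_label[OF A(1) B]
      unfolding exceptional_def conbhd_def nbhd_def verts_G' adj_G' label_def by auto
    ultimately show ?thesis using card_mono[OF fin(2)] le_trans by blast
  qed
qed

lemma card_exceptional_le: "card {y. exceptional x y} \<le> l * d"
proof (cases "x \<in> S")
  case False
  then show ?thesis unfolding exceptional_def by simp
next
  case True
  have "{y. exceptional x y} = (\<Union>B\<in>P. {y\<in>B. exceptional x y})"
    using Union_P exceptional_in_S by auto
  then have "card {y. exceptional x y} \<le> (\<Sum>B\<in>P. card {y\<in>B. exceptional x y})"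
    using card_UN_le[OF finite_P] by metis
  also have "\<dots> \<le> card P * d"
    using sum_bounded_above[of P "\<lambda>B. card {y\<in>B. exceptional x y}" d] card_exceptional_in_bag_le[OF True]
    by auto
  also have "\<dots> \<le> l * d" using card_P by simp
  finally show ?thesis .
qed

text \<open>An induced exceptional path is a realisation of the word of labels along it: consecutive
  vertices are adjacent iff H_P says they are not, and all other pairs obey H_P.\<close>

lemma no_long_exceptional_path: "\<not> induced_path exceptional p (Suc N)"
proof
  assume path: "induced_path exceptional p (Suc N)"
  have p_S: "p i \<in> S" if "i \<le> Suc N" for i
  proof (cases "i = Suc N")
    case True
    then have "exceptional (p N) (p i)" using path unfolding induced_path_def by auto
    then show ?thesis using exceptional_in_S by blast
  next
    case False
    then have "exceptional (p i) (p (Suc i))" using path that unfolding induced_path_def by auto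
    then show ?thesis using exceptional_in_S by blast
  qed
  define v where "v = map (\<lambda>i. label (p i)) [0..<Suc (Suc N)]"
  have adj_p: "E (p i) (p j) = word_adj H_P v i j" if ij: "i \<le> Suc N" "j \<le> Suc N" "i \<noteq> j" for i j
  proof -
    have label: "v ! i = label (p i)" "v ! j = label (p j)" using ij unfolding v_def
      by (simp_all del: upt_Suc add: nth_map_upt)
    have "p i \<noteq> p j" using path ij unfolding induced_path_def inj_on_def by auto
    show ?thesis
    proof (cases "i + 1 = j \<or> j + 1 = i")
      case True
      then have "exceptional (p i) (p j)" using path ij exceptional_sym unfolding induced_path_def by auto
      then show ?thesis using True label unfolding exceptional_def word_adj_def by auto
    next
      case False
      then have "\<not> exceptional (p i) (p j)"
        using path ij exceptional_sym unfolding induced_path_def by (metis linorder_neqE_nat Suc_eq_plus1 Suc_lessI)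
      then show ?thesis using False label \<open>p i \<noteq> p j\<close> p_S ij unfolding exceptional_def word_adj_def by auto
    qed
  qed
  have "realizable X H_P v"
    unfolding realizable_def
  proof (intro bexI[OF _ graph_in_X] exI[of _ p] conjI allI impI)
    show "inj_on p {..<length v}" using path unfolding induced_path_def v_def by (simp add: lessThan_Suc_atMost)
    show "p ` {..<length v} \<subseteq> verts ({1..n}, E)" using p_S S_subset unfolding v_def verts_def by auto
    show "adj ({1..n}, E) (p i) (p j) = word_adj H_P v i j" if "i < length v" "j < length v" "i \<noteq> j" for i j
      using adj_p that unfolding v_def adj_def by simp
  qed
  moreover have "set v \<subseteq> {..<l}" using p_S label_less unfolding v_def by auto
  ultimately show False using no_long_words[OF graph_on_labels_H_P] unfolding v_def by simp
qed

definition component :: "nat \<Rightarrow> nat set" where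
  "component x = {y. exceptional\<^sup>*\<^sup>* x y}"

lemma component_self: "x \<in> component x"
  unfolding component_def by simp

lemma component_eq: "y \<in> component x \<Longrightarrow> component y = component x"
proof -
  have "equivp exceptional\<^sup>*\<^sup>*" by (rule equivp_rtranclp) (auto simp: symp_def exceptional_sym)
  then show "y \<in> component x \<Longrightarrow> component y = component x"
    unfolding component_def equivp_def by (metis mem_Collect_eq)
qed

lemma component_subset_S: "x \<in> S \<Longrightarrow> component x \<subseteq> S"
  unfolding component_def by (auto elim: rtranclp_induct dest: exceptional_in_S)

lemma finite_card_component: "finite (component x) \<and> card (component x) \<le> comp_size"
  unfolding component_def
  by (rule finite_card_reachable) (use finite_exceptional card_exceptional_le no_long_exceptional_path in auto)

definition rep :: "nat \<Rightarrow> nat" where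
  "rep x = (if x \<in> S then Min (component x) else x)"

lemma rep_in_component: "x \<in> S \<Longrightarrow> rep x \<in> component x"
  unfolding rep_def using finite_card_component component_self by (auto intro!: Min_in)

lemma rep_in_S: "x \<in> S \<Longrightarrow> rep x \<in> S"
  using rep_in_component component_subset_S by blast

lemma rep_in_V: "x \<in> V \<Longrightarrow> rep x \<in> V"
  using rep_in_S[of x] S_subset by (cases "x \<in> S") (auto simp: rep_def[of x])

lemma rep_eq_iff: "x \<in> S \<Longrightarrow> y \<in> S \<Longrightarrow> rep x = rep y \<longleftrightarrow> component x = component y"
  unfolding rep_def using rep_in_component component_eq by (metis rep_def)

lemma rep_rep: "rep (rep x) = rep x"
  by (cases "x \<in> S") (simp_all add: rep_eq_iff rep_in_S rep_in_component component_eq, simp add: rep_def)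

definition block :: "nat \<Rightarrow> nat set" where
  "block x = {z\<in>V. rep z = rep x}"

lemma block_subset: "x \<in> V \<Longrightarrow> block x \<subseteq> (if x \<in> S then component x else {x})"
  unfolding block_def using rep_in_S component_self rep_eq_iff by (auto simp: rep_def)

lemma card_block_le: "x \<in> V \<Longrightarrow> card (block x) \<le> comp_size"
proof -
  assume x: "x \<in> V"
  show ?thesis
  proof (cases "x \<in> S")
    case True
    then have "card (block x) \<le> card (component x)"
      using block_subset[OF x] finite_card_component[of x] by (intro card_mono) auto
    then show ?thesis using finite_card_component[of x] by (blast intro: order_trans)
  next
    case False
    then have "card (block x) \<le> card {x}" using block_subset[OF x] by (intro card_mono) auto
    also have "\<dots> \<le> comp_size" by (simp add: Suc_le_eq)
    finally show ?thesis .
  qed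
qed

definition code :: "nat \<Rightarrow> bool \<times> nat \<times> nat set \<times> nat set" where
  "code x = (x \<notin> S, if x \<in> S then label x else 0,
    rank (block x) ` {z\<in>block x. exceptional x z}, rank (V - S) ` {r\<in>V - S. E x r})"

lemma exceptional_iff_code:
  assumes "x \<in> S" "y \<in> V"
  shows "exceptional x y \<longleftrightarrow> rep x = rep y \<and> rank (block x) y \<in> rank (block x) ` {z\<in>block x. exceptional x z}"
proof
  assume "exceptional x y"
  then have "y \<in> component x" "y \<in> S" unfolding component_def using exceptional_in_S by auto
  then have "rep x = rep y" using rep_eq_iff component_eq assms by metis
  then show "rep x = rep y \<and> rank (block x) y \<in> rank (block x) ` {z\<in>block x. exceptional x z}"
    using \<open>exceptional x y\<close> assms unfolding block_def by auto
next
  assume "rep x = rep y \<and> rank (block x) y \<in> rank (block x) ` {z\<in>block x. exceptional x z}"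
  moreover have "y \<in> block x" "finite (block x)" using assms calculation unfolding block_def by auto
  ultimately show "exceptional x y" using inj_on_rank unfolding inj_on_def by blast
qed

lemma decode_code: "E = decode n code H_P rep"
proof (intro ext)
  fix x y
  have outside: "{z\<in>V. fst (code z)} = V - S" unfolding code_def by auto
  have rank_mem: "rank (V - S) r \<in> rank (V - S) ` {r\<in>V - S. E z r} \<longleftrightarrow> E z r" if "r \<in> V - S" for r z
  proof -
    have "inj_on (rank (V - S)) (V - S)" by (rule inj_on_rank) simp
    then show ?thesis using that by (subst inj_on_image_mem_iff) auto
  qed
  show "E x y = decode n code H_P rep x y"
  proof (cases "x \<in> V \<and> y \<in> V \<and> x \<noteq> y")
    case False
    then show ?thesis using E_in_V E_irrefl unfolding decode_def by blast
  next
    case xy: True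
    consider "y \<notin> S" | "y \<in> S" "x \<notin> S" | "x \<in> S" "y \<in> S" by blast
    then show ?thesis
    proof cases
      case 1
      then show ?thesis using xy rank_mem unfolding decode_def outside by (simp add: code_def)
    next
      case 2
      then show ?thesis using xy rank_mem E_sym[of x y] unfolding decode_def outside by (simp add: code_def)
    next
      case 3
      have "decode n code H_P rep x y \<longleftrightarrow> H_P (label x) (label y)
          \<noteq> (rep x = rep y \<and> rank (block x) y \<in> rank (block x) ` {z\<in>block x. exceptional x z})"
        using xy 3 unfolding decode_def outside by (simp add: code_def block_def)
      also have "\<dots> \<longleftrightarrow> H_P (label x) (label y) \<noteq> exceptional x y"
        using exceptional_iff_code 3 xy by simp
      also have "\<dots> \<longleftrightarrow> E x y" using xy 3 unfolding exceptional_def by auto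
      finally show ?thesis by simp
    qed
  qed
qed

lemma code_in_vertex_codes: "x \<in> V \<Longrightarrow> code x \<in> vertex_codes l comp_size c"
proof -
  assume x: "x \<in> V"
  have "rank (block x) z < comp_size" if "z \<in> block x" for z
    using rank_less[of "block x" z] card_block_le[OF x] that unfolding block_def by auto
  moreover have "rank (V - S) z < c" if "z \<in> V - S" for z
    using rank_less[of "V - S" z] card_outside_S that by auto
  ultimately show ?thesis
    unfolding vertex_codes_def code_def using label_less by (auto simp: less_imp_le)
qed

lemma graph_in_decode_image:
  "E \<in> (\<lambda>(\<phi>, H, f). decode n \<phi> H f) `
     ((\<Pi>\<^sub>E x\<in>V. vertex_codes l comp_size c) \<times> {H. graph_on_labels l H}
       \<times> bounded_fibre_retractions V comp_size)"
proof (rule image_eqI)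
  show "E = (\<lambda>(\<phi>, H, f). decode n \<phi> H f) (restrict code V, H_P, restrict rep V)"
    using decode_code decode_cong[of n code "restrict code V" rep "restrict rep V" H_P] by simp
  have "restrict rep V \<in> bounded_fibre_retractions V comp_size"
  proof -
    have "{z\<in>V. restrict rep V z = restrict rep V x} = block x" if "x \<in> V" for x
      using that unfolding block_def by auto
    then show ?thesis
      unfolding bounded_fibre_retractions_def using rep_in_V rep_rep card_block_le by auto
  qed
  then show "(restrict code V, H_P, restrict rep V)
      \<in> (\<Pi>\<^sub>E x\<in>V. vertex_codes l comp_size c) \<times> {H. graph_on_labels l H} \<times> bounded_fibre_retractions V comp_size"
    using code_in_vertex_codes graph_on_labels_H_P by auto
qed

end

section \<open>Bounding the speed\<close>

lemma graphs_subset_decode_image: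
  fixes X :: "graph set" and l d c N n :: nat
  defines "s \<equiv> (l * d + 1) ^ N"
  assumes her: "hereditary X"
    and decomposition: "\<forall>G\<in>X. \<exists>S. S \<subseteq> verts G \<and> strong_ld_graph (induced G S) l d \<and> card (verts G - S) < c"
    and no_long_words: "\<And>H v. graph_on_labels l H \<Longrightarrow> length v = Suc (Suc N) \<Longrightarrow> set v \<subseteq> {..<l}
      \<Longrightarrow> \<not> realizable X H v"
  shows "{E. ({1..n}, E) \<in> X} \<subseteq> (\<lambda>(\<phi>, H, f). decode n \<phi> H f) `
    ((\<Pi>\<^sub>E x\<in>{1..n}. vertex_codes l s c) \<times> {H. graph_on_labels l H} \<times> bounded_fibre_retractions {1..n} s)"
proof
  fix E assume "E \<in> {E. ({1..n}, E) \<in> X}"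
  then have in_X: "({1..n}, E) \<in> X" by simp
  then obtain S where S: "S \<subseteq> {1..n}" "strong_ld_graph (induced ({1..n}, E) S) l d" "card ({1..n} - S) < c"
    using decomposition unfolding verts_def by fastforce
  then obtain P where P: "ld_partition (induced ({1..n}, E) S) l d P"
    unfolding strong_ld_graph_def by blast
  interpret bounded_words_graph X l d c N n E S P
    by unfold_locales (use her in_X S P no_long_words in auto)
  show "E \<in> (\<lambda>(\<phi>, H, f). decode n \<phi> H f) `
    ((\<Pi>\<^sub>E x\<in>{1..n}. vertex_codes l s c) \<times> {H. graph_on_labels l H} \<times> bounded_fibre_retractions {1..n} s)"
    using graph_in_decode_image unfolding s_def .
qed

lemma card_speed_le:
  fixes X :: "graph set" and l d c N n :: nat
  defines "s \<equiv> (l * d + 1) ^ N"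
  assumes her: "hereditary X"
    and decomposition: "\<forall>G\<in>X. \<exists>S. S \<subseteq> verts G \<and> strong_ld_graph (induced G S) l d \<and> card (verts G - S) < c"
    and no_long_words: "\<And>H v. graph_on_labels l H \<Longrightarrow> length v = Suc (Suc N) \<Longrightarrow> set v \<subseteq> {..<l}
      \<Longrightarrow> \<not> realizable X H v"
    and n: "n \<ge> 1"
  shows "real (speed X n) \<le> real (card (vertex_codes l s c)) ^ n * real (card {H. graph_on_labels l H})
    * (2 ^ n * real n powr (real n - real n / real s))"
proof -
  define Codes where "Codes = (\<Pi>\<^sub>E x\<in>{1..n}. vertex_codes l s c) \<times> {H. graph_on_labels l H}
    \<times> bounded_fibre_retractions {1..n} s"
  have "finite (vertex_codes l s c)" unfolding vertex_codes_def by simp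
  moreover have "finite (bounded_fibre_retractions {1..n} s)"
    unfolding bounded_fibre_retractions_def
    by (rule finite_subset[of _ "{1..n} \<rightarrow>\<^sub>E {1..n}"]) (auto intro: finite_PiE)
  ultimately have "finite Codes"
    unfolding Codes_def using finite_graphs_on_labels by (intro finite_cartesian_product finite_PiE) auto
  then have "speed X n \<le> card Codes"
    using graphs_subset_decode_image[of X l d c N n, OF her decomposition no_long_words] unfolding speed_def Codes_def s_def
    by (meson card_image_le card_mono finite_imageI le_trans)
  also have "\<dots> = card (vertex_codes l s c) ^ n * card {H. graph_on_labels l H} * card (bounded_fibre_retractions {1..n} s)"
    unfolding Codes_def by (simp add: card_cartesian_product card_PiE)
  finally have "real (speed X n) \<le> real (card (vertex_codes l s c)) ^ n * real (card {H. graph_on_labels l H})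
      * real (card (bounded_fibre_retractions {1..n} s))"
    by (metis of_nat_le_iff of_nat_mult of_nat_power)
  also have "\<dots> \<le> real (card (vertex_codes l s c)) ^ n * real (card {H. graph_on_labels l H})
      * (2 ^ n * real n powr (real n - real n / real s))"
    using card_bounded_fibre_retractions_le[of "{1..n}" s] n unfolding s_def by (intro mult_left_mono) auto
  finally show ?thesis .
qed

lemma eventually_exp_less_powr:
  fixes K C a :: real
  assumes "a > 0" "C > 0"
  shows "\<forall>\<^sub>F n in sequentially. K * C ^ n < real n powr (a * real n)"
proof -
  obtain m :: nat where m: "(2 * C) powr (1 / a) \<le> real m" using real_arch_simple by blast
  obtain m' where m': "K < 2 ^ m'" using real_arch_pow[of 2 K] by auto
  have "\<forall>\<^sub>F n in sequentially. n \<ge> max 1 (max m m')" by (rule eventually_ge_at_top)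
  then show ?thesis
  proof eventually_elim
    case (elim n)
    have "K < 2 ^ n" using m' elim by (smt (verit) max.bounded_iff one_le_numeral power_increasing)
    have "2 * C = ((2 * C) powr (1 / a)) powr a" using assms by (simp add: powr_powr)
    also have "\<dots> \<le> real n powr a" using elim m assms by (intro powr_mono2) auto
    finally have base: "2 * C \<le> real n powr a" .
    have "K * C ^ n < 2 ^ n * C ^ n" using \<open>K < 2 ^ n\<close> assms by (intro mult_strict_right_mono) auto
    also have "\<dots> = (2 * C) ^ n" by (simp add: power_mult_distrib)
    also have "\<dots> \<le> (real n powr a) ^ n" using base assms by (intro power_mono) auto
    also have "\<dots> = real n powr (a * real n)" using elim by (simp add: powr_realpow[symmetric] powr_powr)
    finally show ?case .
  qed
qed

text \<open>The code count is only of order C^n n^((1 - 1/s) n), which stays below the Bell-number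
  lower bound n^((1 - 1/(2s)) n).\<close>

lemma long_realizable_words:
  fixes X :: "graph set"
  assumes her: "hereditary X" and above_bell: "above_bell X"
    and decomposition: "\<forall>G\<in>X. \<exists>S. S \<subseteq> verts G \<and> strong_ld_graph (induced G S) l d \<and> card (verts G - S) < c"
  shows "\<exists>H v. graph_on_labels l H \<and> length v = Suc (Suc N) \<and> set v \<subseteq> {..<l} \<and> realizable X H v"
proof (rule ccontr)
  assume "\<not> ?thesis"
  then have no_long_words: "\<And>H v. graph_on_labels l H \<Longrightarrow> length v = Suc (Suc N) \<Longrightarrow> set v \<subseteq> {..<l}
      \<Longrightarrow> \<not> realizable X H v"
    by blast
  define s where "s = (l * d + 1) ^ N"
  define C where "C = real (card (vertex_codes l s c))"
  define K where "K = real (card {H. graph_on_labels l H})"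
  define a where "a = 1 / (2 * real s)"
  have "s > 0" unfolding s_def by simp
  then have "a > 0" unfolding a_def by simp
  have "(True, 0, {}, {}) \<in> vertex_codes l s c" unfolding vertex_codes_def by simp
  moreover have "finite (vertex_codes l s c)" unfolding vertex_codes_def by simp
  ultimately have "C > 0" unfolding C_def by (auto simp: card_gt_0_iff)
  have "\<forall>\<^sub>F n in sequentially. real n powr ((1 - a) * real n) \<le> real (speed X n)"
    using above_bell \<open>a > 0\<close> unfolding above_bell_def by blast
  moreover have "\<forall>\<^sub>F n in sequentially. K * (2 * C) ^ n < real n powr (a * real n)"
    using eventually_exp_less_powr[OF \<open>a > 0\<close>, of "2 * C" K] \<open>C > 0\<close> by simp
  moreover have "\<forall>\<^sub>F n in sequentially. n \<ge> (1::nat)" by (rule eventually_ge_at_top)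
  ultimately have "\<forall>\<^sub>F n in sequentially. False"
  proof eventually_elim
    case (elim n)
    have "real (speed X n) \<le> C ^ n * K * (2 ^ n * real n powr (real n - real n / real s))"
      using card_speed_le[OF her decomposition no_long_words elim(3)] unfolding C_def K_def s_def .
    also have "\<dots> = (K * (2 * C) ^ n) * real n powr (real n - real n / real s)"
      by (simp add: power_mult_distrib mult_ac)
    also have "\<dots> < real n powr (a * real n) * real n powr (real n - real n / real s)"
      using elim(2,3) by (intro mult_strict_right_mono) auto
    also have "\<dots> = real n powr ((1 - a) * real n)"
      unfolding a_def using \<open>s > 0\<close> by (simp add: powr_add[symmetric] field_simps)
    finally show False using elim(1) by simp
  qed
  then show False by simp
qed

lemma has_long_realizable_words:
  fixes X :: "graph set"
  assumes "hereditary X" "above_bell X"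
    and "\<forall>G\<in>X. \<exists>S. S \<subseteq> verts G \<and> strong_ld_graph (induced G S) l d \<and> card (verts G - S) < c"
  shows "\<exists>H. graph_on_labels l H \<and> has_long_words {v. set v \<subseteq> {..<l} \<and> realizable X H v}"
proof (rule ccontr)
  define L where "L H = {v. set v \<subseteq> {..<l} \<and> realizable X H v}" for H
  assume "\<not> ?thesis"
  then have "\<exists>m. \<forall>v\<in>L H. length v < m" if "graph_on_labels l H" for H
    using that unfolding has_long_words_def L_def by (meson not_le)
  then obtain bound where bound: "\<And>H v. graph_on_labels l H \<Longrightarrow> v \<in> L H \<Longrightarrow> length v < bound H"
    by metis
  define N where "N = Max (bound ` {H. graph_on_labels l H})"
  obtain H v where Hv: "graph_on_labels l H" "length v = Suc (Suc N)" "set v \<subseteq> {..<l}" "realizable X H v"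
    using long_realizable_words[OF assms] by blast
  then have "length v < bound H" using bound unfolding L_def by blast
  moreover have "bound H \<le> N" unfolding N_def using finite_graphs_on_labels Hv(1) by (intro Max_ge) auto
  ultimately show False using Hv(2) by simp
qed

text \<open>The hypothesis on the distinguishing number only guarantees that l, d and c exist.\<close>

theorem theorem3p13:
  fixes \<X> :: "graph set" and l d c :: nat
  assumes "hereditary \<X>"
    and "above_bell \<X>"
    and "finite_distinguishing_number \<X>"
    and "\<forall>G\<in>\<X>. \<exists>S. S \<subseteq> verts G \<and> strong_ld_graph (induced G S) l d
                     \<and> card (verts G - S) < c"
  shows "\<exists>(w :: nat \<Rightarrow> nat) (A :: nat set) (H :: nat \<Rightarrow> nat \<Rightarrow> bool).
           finite A \<and> range w \<subseteq> A \<and> card A \<le> l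
           \<and> (\<forall>x y. H x y \<longrightarrow> x \<in> A \<and> y \<in> A) \<and> (\<forall>x y. H x y \<longleftrightarrow> H y x)
           \<and> almost_periodic w
           \<and> P_class w H \<subseteq> \<X>"
proof -
  obtain H where H: "graph_on_labels l H"
    and long: "has_long_words {v. set v \<subseteq> {..<l} \<and> realizable \<X> H v}"
    using has_long_realizable_words[OF assms(1,2,4)] by blast
  obtain y where y: "factors y \<subseteq> {v. set v \<subseteq> {..<l} \<and> realizable \<X> H v}"
    and "range y \<subseteq> {..<l}" and "almost_periodic (\<lambda>i. y (i - 1))"
    using exists_almost_periodic_word[OF _ factor_closed_realizable long] by blast
  moreover have "P_class (\<lambda>i. y (i - 1)) H \<subseteq> \<X>"
    using P_class_subset[OF assms(1)] y by blast
  moreover have "range (\<lambda>i. y (i - 1)) \<subseteq> {..<l}" using \<open>range y \<subseteq> {..<l}\<close> by auto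
  ultimately show ?thesis using H unfolding graph_on_labels_def
    by (intro exI[of _ "\<lambda>i. y (i - 1)"] exI[of _ "{..<l}"] exI[of _ H]) auto
qed

end
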